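(* Let $\mathbb{X}$ be a reverse differential restriction category. For any parallel maps $f,g:A\to B$, if $f\le g$ then $R[f]\le R[g]$. Moreover, if $\mathbb{X}$ is a join restriction category, then for every pairwise compatible family $\{f_i\}$ of maps $A\to B$ we have $R[\bigvee_i f_i]=\bigvee_i R[f_i]$.
   Context: Composition is written in diagrammatic order: $fg$ means "first $f$, then $g$". A restriction category is a category with an operation sending each $f:A\to B$ to a map $\bar f:A\to A$ such that $\bar f f=f$, $\bar f\bar g=\bar g\bar f$ (for $f,g$ with common domain), $\overline{\bar f g}=\bar f\bar g$, and $f\bar g=\overline{fg}\,f$. A map $f$ is total if $\bar f=1$. For parallel maps: - $f\le g$ means $\bar f g=f$; - $f,g$ are compatible if $\bar f g=\bar g f$; - the join $\bigvee_i f_i$ of a family is its least upper bound for $\le$. A join restriction category is a restriction category in which every family of pairwise compatible parallel maps (including the empty family) has a join, and composition preserves joins on both sides: $h(\bigvee_i f_i)=\bigvee_i hf_i$ and $(\bigvee_i f_i)k=\bigvee_i f_ik$. The category has restriction products if: - there is an object $1$ with a total map $!_A:A\to 1$ for each $A$ such that every $f:A\to 1$ equals $\bar f\,!_A$; - for all $A,B$ there is an object $A\times B$ with total maps $\pi_0,\pi_1$ such that for all $f:C\to A$, $g:C\to B$ there is a unique $\langle f,g\rangle:C\to A\times B$ with $\langle f,g\rangle\pi_0=\bar g f$ and $\langle f,g\rangle\pi_1=\bar f g$. Write $f\times g=\langle \pi_0 f,\pi_1 g\rangle$. A Cartesian left additive restriction category is a restriction category with restriction products in which every hom-set is a commutative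 monoid $(+,0)$ such that: - $\overline{f+g}=\bar f\bar g$ and $\bar 0=1$; - $x(f+g)=xf+xg$ and $x0=\bar x 0$; - $(f+g)\pi_i=f\pi_i+g\pi_i$ and $0\pi_i=0$. Write $\iota_0=\langle 1,0\rangle:A\to A\times B$ and $\iota_1=\langle 0,1\rangle:B\to A\times B$. A reverse differential restriction category (RDRC) is a Cartesian left additive restriction category with an operation sending each $f:A\to B$ to $R[f]:A\times B\to A$ such that: - [RD.1] $R[f+g]=R[f]+R[g]$ and $R[0]=0$. - [RD.2] $\langle a,b+c\rangle R[f]=\langle a,b\rangle R[f]+\langle a,c\rangle R[f]$ and $\langle a,0\rangle R[f]=\overline{af}\,0$. - [RD.3] $R[\pi_j]=\pi_1\iota_j$. - [RD.4] $R[\langle f,g\rangle]=(1\times\pi_0)R[f]+(1\times\pi_1)R[g]$. - [RD.5] $R[fg]=\langle \pi_0,\langle\pi_0 f,\pi_1\rangle R[g]\rangle R[f]$. - [RD.6] $\langle 1\times\pi_0,\,0\times\pi_1\rangle(\iota_0\times 1)R[R[R[f]]]\pi_1=(1\times\pi_1)R[f]$. - [RD.7] With $g:=(\iota_0\times 1)R[R[f]]\pi_1$, one has $(\iota_0\times1)R[R[g]]\pi_1=\mathrm{ex}\,(\iota_0\times 1)R[R[g]]\pi_1$, where $\mathrm{ex}=\langle\pi_0\times\pi_0,\pi_1\times\pi_1\rangle$. - [RD.8] $\overline{R[f]}=\bar f\times 1$. - [RD.9] $R[\bar f]=(\bar f\times 1)\pi_1$. *)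

theory Defs
  imports Main
begin

text \<open>A (large) category presented by a set of objects and a set of arrows over
  carrier types 'o and 'a, with composition written in diagrammatic order:
  Comp f g means "first f, then g".\<close>

record ('o, 'a) rdrc_data =
  Obj  :: "'o set"
  Arr  :: "'a set"
  Dom  :: "'a \<Rightarrow> 'o"
  Cod  :: "'a \<Rightarrow> 'o"
  Id   :: "'o \<Rightarrow> 'a"
  Comp :: "'a \<Rightarrow> 'a \<Rightarrow> 'a"
  Rst  :: "'a \<Rightarrow> 'a"
  Term :: "'o"
  Bang :: "'o \<Rightarrow> 'a"
  Prod :: "'o \<Rightarrow> 'o \<Rightarrow> 'o"
  Pi0  :: "'o \<Rightarrow> 'o \<Rightarrow> 'a"
  Pi1  :: "'o \<Rightarrow> 'o \<Rightarrow> 'a"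
  Pair :: "'a \<Rightarrow> 'a \<Rightarrow> 'a"
  Add  :: "'a \<Rightarrow> 'a \<Rightarrow> 'a"
  Zero :: "'o \<Rightarrow> 'o \<Rightarrow> 'a"
  Rev  :: "'a \<Rightarrow> 'a"

definition hom :: "('o, 'a, 'x) rdrc_data_scheme \<Rightarrow> 'o \<Rightarrow> 'o \<Rightarrow> 'a set" where
  "hom S A B = {f \<in> Arr S. Dom S f = A \<and> Cod S f = B}"

definition category :: "('o, 'a, 'x) rdrc_data_scheme \<Rightarrow> bool" where
  "category S \<longleftrightarrow>
     (\<forall>f \<in> Arr S. Dom S f \<in> Obj S \<and> Cod S f \<in> Obj S) \<and>
     (\<forall>A \<in> Obj S. Id S A \<in> hom S A A) \<and>
     (\<forall>A B D f g. f \<in> hom S A B \<longrightarrow> g \<in> hom S B D \<longrightarrow> Comp S f g \<in> hom S A D) \<and>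
     (\<forall>f \<in> Arr S. Comp S (Id S (Dom S f)) f = f \<and> Comp S f (Id S (Cod S f)) = f) \<and>
     (\<forall>A B D E f g h. f \<in> hom S A B \<longrightarrow> g \<in> hom S B D \<longrightarrow> h \<in> hom S D E \<longrightarrow>
        Comp S (Comp S f g) h = Comp S f (Comp S g h))"

definition restriction_category :: "('o, 'a, 'x) rdrc_data_scheme \<Rightarrow> bool" where
  "restriction_category S \<longleftrightarrow> category S \<and>
     (\<forall>A B f. f \<in> hom S A B \<longrightarrow> Rst S f \<in> hom S A A) \<and>
     (\<forall>f \<in> Arr S. Comp S (Rst S f) f = f) \<and>
     (\<forall>f \<in> Arr S. \<forall>g \<in> Arr S. Dom S f = Dom S g \<longrightarrow>
        Comp S (Rst S f) (Rst S g) = Comp S (Rst S g) (Rst S f)) \<and>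
     (\<forall>f \<in> Arr S. \<forall>g \<in> Arr S. Dom S f = Dom S g \<longrightarrow>
        Rst S (Comp S (Rst S f) g) = Comp S (Rst S f) (Rst S g)) \<and>
     (\<forall>A B D f g. f \<in> hom S A B \<longrightarrow> g \<in> hom S B D \<longrightarrow>
        Comp S f (Rst S g) = Comp S (Rst S (Comp S f g)) f)"

definition total :: "('o, 'a, 'x) rdrc_data_scheme \<Rightarrow> 'a \<Rightarrow> bool" where
  "total S f \<longleftrightarrow> Rst S f = Id S (Dom S f)"

definition rleq :: "('o, 'a, 'x) rdrc_data_scheme \<Rightarrow> 'a \<Rightarrow> 'a \<Rightarrow> bool" where
  "rleq S f g \<longleftrightarrow> Comp S (Rst S f) g = f"

definition compatible :: "('o, 'a, 'x) rdrc_data_scheme \<Rightarrow> 'a \<Rightarrow> 'a \<Rightarrow> bool" where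
  "compatible S f g \<longleftrightarrow> Comp S (Rst S f) g = Comp S (Rst S g) f"

definition compatible_family :: "('o, 'a, 'x) rdrc_data_scheme \<Rightarrow> 'a set \<Rightarrow> bool" where
  "compatible_family S F \<longleftrightarrow> (\<forall>f \<in> F. \<forall>g \<in> F. compatible S f g)"

definition is_join :: "('o, 'a, 'x) rdrc_data_scheme \<Rightarrow> 'o \<Rightarrow> 'o \<Rightarrow> 'a set \<Rightarrow> 'a \<Rightarrow> bool" where
  "is_join S A B F j \<longleftrightarrow> j \<in> hom S A B \<and> (\<forall>f \<in> F. rleq S f j) \<and>
     (\<forall>h \<in> hom S A B. (\<forall>f \<in> F. rleq S f h) \<longrightarrow> rleq S j h)"

definition join_restriction_category :: "('o, 'a, 'x) rdrc_data_scheme \<Rightarrow> bool" where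
  "join_restriction_category S \<longleftrightarrow> restriction_category S \<and>
     (\<forall>A \<in> Obj S. \<forall>B \<in> Obj S. \<forall>F. F \<subseteq> hom S A B \<and> compatible_family S F \<longrightarrow>
        (\<exists>j. is_join S A B F j)) \<and>
     (\<forall>A B F j. F \<subseteq> hom S A B \<and> compatible_family S F \<and> is_join S A B F j \<longrightarrow>
        (\<forall>D h. h \<in> hom S D A \<longrightarrow> is_join S D B ((\<lambda>f. Comp S h f) ` F) (Comp S h j)) \<and>
        (\<forall>D k. k \<in> hom S B D \<longrightarrow> is_join S A D ((\<lambda>f. Comp S f k) ` F) (Comp S j k)))"

definition restriction_products :: "('o, 'a, 'x) rdrc_data_scheme \<Rightarrow> bool" where
  "restriction_products S \<longleftrightarrow>
     Term S \<in> Obj S \<and>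
     (\<forall>A \<in> Obj S. Bang S A \<in> hom S A (Term S) \<and> total S (Bang S A) \<and>
        (\<forall>f \<in> hom S A (Term S). f = Comp S (Rst S f) (Bang S A))) \<and>
     (\<forall>A \<in> Obj S. \<forall>B \<in> Obj S. Prod S A B \<in> Obj S \<and>
        Pi0 S A B \<in> hom S (Prod S A B) A \<and> total S (Pi0 S A B) \<and>
        Pi1 S A B \<in> hom S (Prod S A B) B \<and> total S (Pi1 S A B) \<and>
        (\<forall>X f g. f \<in> hom S X A \<longrightarrow> g \<in> hom S X B \<longrightarrow>
           Pair S f g \<in> hom S X (Prod S A B) \<and>
           Comp S (Pair S f g) (Pi0 S A B) = Comp S (Rst S g) f \<and>
           Comp S (Pair S f g) (Pi1 S A B) = Comp S (Rst S f) g \<and>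
           (\<forall>h \<in> hom S X (Prod S A B).
              Comp S h (Pi0 S A B) = Comp S (Rst S g) f \<and>
              Comp S h (Pi1 S A B) = Comp S (Rst S f) g \<longrightarrow> h = Pair S f g)))"

definition prodmap :: "('o, 'a, 'x) rdrc_data_scheme \<Rightarrow> 'a \<Rightarrow> 'a \<Rightarrow> 'a" where
  "prodmap S f g = Pair S (Comp S (Pi0 S (Dom S f) (Dom S g)) f) (Comp S (Pi1 S (Dom S f) (Dom S g)) g)"

definition iota0 :: "('o, 'a, 'x) rdrc_data_scheme \<Rightarrow> 'o \<Rightarrow> 'o \<Rightarrow> 'a" where
  "iota0 S A B = Pair S (Id S A) (Zero S A B)"

definition iota1 :: "('o, 'a, 'x) rdrc_data_scheme \<Rightarrow> 'o \<Rightarrow> 'o \<Rightarrow> 'a" where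
  "iota1 S A B = Pair S (Zero S B A) (Id S B)"

definition cartesian_left_additive_restriction_category ::
  "('o, 'a, 'x) rdrc_data_scheme \<Rightarrow> bool" where
  "cartesian_left_additive_restriction_category S \<longleftrightarrow>
     restriction_category S \<and> restriction_products S \<and>
     (\<forall>A \<in> Obj S. \<forall>B \<in> Obj S.
        Zero S A B \<in> hom S A B \<and> Rst S (Zero S A B) = Id S A \<and>
        (\<forall>f \<in> hom S A B. \<forall>g \<in> hom S A B. Add S f g \<in> hom S A B \<and>
           Add S f g = Add S g f \<and> Rst S (Add S f g) = Comp S (Rst S f) (Rst S g)) \<and>
        (\<forall>f \<in> hom S A B. \<forall>g \<in> hom S A B. \<forall>h \<in> hom S A B.
           Add S (Add S f g) h = Add S f (Add S g h)) \<and>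
        (\<forall>f \<in> hom S A B. Add S f (Zero S A B) = f) \<and>
        (\<forall>D \<in> Obj S. \<forall>x \<in> hom S D A.
           (\<forall>f \<in> hom S A B. \<forall>g \<in> hom S A B. Comp S x (Add S f g) = Add S (Comp S x f) (Comp S x g)) \<and>
           Comp S x (Zero S A B) = Comp S (Rst S x) (Zero S D B)) \<and>
        (\<forall>D \<in> Obj S. \<forall>f \<in> hom S D (Prod S A B). \<forall>g \<in> hom S D (Prod S A B).
           Comp S (Add S f g) (Pi0 S A B) = Add S (Comp S f (Pi0 S A B)) (Comp S g (Pi0 S A B)) \<and>
           Comp S (Add S f g) (Pi1 S A B) = Add S (Comp S f (Pi1 S A B)) (Comp S g (Pi1 S A B))) \<and>
        (\<forall>D \<in> Obj S. Comp S (Zero S D (Prod S A B)) (Pi0 S A B) = Zero S D A \<and>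
                       Comp S (Zero S D (Prod S A B)) (Pi1 S A B) = Zero S D B))"

definition rdrc :: "('o, 'a, 'x) rdrc_data_scheme \<Rightarrow> bool" where
  "rdrc S \<longleftrightarrow> cartesian_left_additive_restriction_category S \<and>
     (\<forall>A \<in> Obj S. \<forall>B \<in> Obj S. \<forall>f \<in> hom S A B.
        Rev S f \<in> hom S (Prod S A B) A \<and>
        \<comment> \<open>RD.1\<close>
        (\<forall>g \<in> hom S A B. Rev S (Add S f g) = Add S (Rev S f) (Rev S g)) \<and>
        Rev S (Zero S A B) = Zero S (Prod S A B) A \<and>
        \<comment> \<open>RD.2\<close>
        (\<forall>X \<in> Obj S. \<forall>a \<in> hom S X A. \<forall>b \<in> hom S X B. \<forall>c \<in> hom S X B.
           Comp S (Pair S a (Add S b c)) (Rev S f) =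
             Add S (Comp S (Pair S a b) (Rev S f)) (Comp S (Pair S a c) (Rev S f))) \<and>
        (\<forall>X \<in> Obj S. \<forall>a \<in> hom S X A.
           Comp S (Pair S a (Zero S X B)) (Rev S f) = Comp S (Rst S (Comp S a f)) (Zero S X A)) \<and>
        \<comment> \<open>RD.5\<close>
        (\<forall>D \<in> Obj S. \<forall>g \<in> hom S B D.
           Rev S (Comp S f g) =
             Comp S (Pair S (Pi0 S A D)
                       (Comp S (Pair S (Comp S (Pi0 S A D) f) (Pi1 S A D)) (Rev S g)))
                    (Rev S f)) \<and>
        \<comment> \<open>RD.6\<close>
        Comp S (Pair S (prodmap S (Id S A) (Pi0 S B B)) (prodmap S (Zero S A A) (Pi1 S B B)))
               (Comp S (prodmap S (iota0 S (Prod S A B) A) (Id S (Prod S A B)))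
                       (Comp S (Rev S (Rev S (Rev S f))) (Pi1 S (Prod S A B) A)))
          = Comp S (prodmap S (Id S A) (Pi1 S B B)) (Rev S f) \<and>
        \<comment> \<open>RD.7\<close>
        (let g = Comp S (prodmap S (iota0 S A B) (Id S A))
                        (Comp S (Rev S (Rev S f)) (Pi1 S A B));
             h = Comp S (prodmap S (iota0 S (Prod S A A) B) (Id S (Prod S A A)))
                        (Comp S (Rev S (Rev S g)) (Pi1 S (Prod S A A) B));
             ex = Pair S (prodmap S (Pi0 S A A) (Pi0 S A A)) (prodmap S (Pi1 S A A) (Pi1 S A A))
         in h = Comp S ex h) \<and>
        \<comment> \<open>RD.8\<close>
        Rst S (Rev S f) = prodmap S (Rst S f) (Id S B) \<and>
        \<comment> \<open>RD.9\<close>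
        Rev S (Rst S f) = Comp S (prodmap S (Rst S f) (Id S A)) (Pi1 S A A)) \<and>
     \<comment> \<open>RD.3\<close>
     (\<forall>A \<in> Obj S. \<forall>B \<in> Obj S.
        Rev S (Pi0 S A B) = Comp S (Pi1 S (Prod S A B) A) (iota0 S A B) \<and>
        Rev S (Pi1 S A B) = Comp S (Pi1 S (Prod S A B) B) (iota1 S A B)) \<and>
     \<comment> \<open>RD.4\<close>
     (\<forall>X \<in> Obj S. \<forall>A \<in> Obj S. \<forall>B \<in> Obj S. \<forall>f \<in> hom S X A. \<forall>g \<in> hom S X B.
        Rev S (Pair S f g) =
          Add S (Comp S (prodmap S (Id S X) (Pi0 S A B)) (Rev S f))
                (Comp S (prodmap S (Id S X) (Pi1 S A B)) (Rev S g)))"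

end

theory Submission
  imports Defs
begin

text \<open>By the chain rule RD.5 and RD.9, precomposing g with
  the restriction idempotent Rst f restricts Rev g by Rst (Pi0 ; f), and by RD.8 this is
  exactly the restriction of Rev f; hence Rev f = Rst (Rev f) ; Rev g.
  For a join j of F, monotonicity bounds all Rev f by Rev j, so their join K exists and
  K \<le> Rev j. Restriction and precomposition with Pi0 preserve joins, so
  Rst K = Rst (Pi0 ; j) = Rst (Rev j), and a map below Rev j with the same restriction
  is Rev j itself.\<close>

locale restriction_cat =
  fixes S :: "('o, 'a, 'x) rdrc_data_scheme"
  assumes restriction_category: "restriction_category S"
begin

lemma category: "category S"
  using restriction_category unfolding restriction_category_def by blast

lemma category_axioms':
  "\<forall>f \<in> Arr S. Dom S f \<in> Obj S \<and> Cod S f \<in> Obj S"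
  "\<forall>A \<in> Obj S. Id S A \<in> hom S A A"
  "\<forall>A B D f g. f \<in> hom S A B \<longrightarrow> g \<in> hom S B D \<longrightarrow> Comp S f g \<in> hom S A D"
  "\<forall>f \<in> Arr S. Comp S (Id S (Dom S f)) f = f \<and> Comp S f (Id S (Cod S f)) = f"
  "\<forall>A B D E f g h. f \<in> hom S A B \<longrightarrow> g \<in> hom S B D \<longrightarrow> h \<in> hom S D E \<longrightarrow>
     Comp S (Comp S f g) h = Comp S f (Comp S g h)"
  using category unfolding category_def by blast+

lemma restriction_category_axioms':
  "\<forall>A B f. f \<in> hom S A B \<longrightarrow> Rst S f \<in> hom S A A"
  "\<forall>f \<in> Arr S. Comp S (Rst S f) f = f"
  "\<forall>f \<in> Arr S. \<forall>g \<in> Arr S. Dom S f = Dom S g \<longrightarrow>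
     Comp S (Rst S f) (Rst S g) = Comp S (Rst S g) (Rst S f)"
  "\<forall>f \<in> Arr S. \<forall>g \<in> Arr S. Dom S f = Dom S g \<longrightarrow>
     Rst S (Comp S (Rst S f) g) = Comp S (Rst S f) (Rst S g)"
  "\<forall>A B D f g. f \<in> hom S A B \<longrightarrow> g \<in> hom S B D \<longrightarrow>
     Comp S f (Rst S g) = Comp S (Rst S (Comp S f g)) f"
  using restriction_category unfolding restriction_category_def by blast+

lemma hom_Obj: "f \<in> hom S A B \<Longrightarrow> A \<in> Obj S \<and> B \<in> Obj S"
  using category_axioms'(1) unfolding hom_def by blast

lemma hom_Dom: "f \<in> hom S A B \<Longrightarrow> Dom S f = A"
  unfolding hom_def by blast

lemma Id_in_hom: "A \<in> Obj S \<Longrightarrow> Id S A \<in> hom S A A"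
  using category_axioms'(2) by blast

lemma comp_in_hom: "f \<in> hom S A B \<Longrightarrow> g \<in> hom S B D \<Longrightarrow> Comp S f g \<in> hom S A D"
  using category_axioms'(3) by blast

lemma comp_assoc:
  "f \<in> hom S A B \<Longrightarrow> g \<in> hom S B D \<Longrightarrow> h \<in> hom S D E \<Longrightarrow>
   Comp S (Comp S f g) h = Comp S f (Comp S g h)"
  using category_axioms'(5) by blast

lemma comp_Id_left: "f \<in> hom S A B \<Longrightarrow> Comp S (Id S A) f = f"
  using category_axioms'(4) unfolding hom_def by blast

lemma comp_Id_right: "f \<in> hom S A B \<Longrightarrow> Comp S f (Id S B) = f"
  using category_axioms'(4) unfolding hom_def by blast

lemma Rst_in_hom: "f \<in> hom S A B \<Longrightarrow> Rst S f \<in> hom S A A"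
  using restriction_category_axioms'(1) by blast

lemma Rst_comp_self: "f \<in> hom S A B \<Longrightarrow> Comp S (Rst S f) f = f"
  using restriction_category_axioms'(2) unfolding hom_def by blast

lemma Rst_comp_commute:
  "f \<in> hom S A B \<Longrightarrow> g \<in> hom S A C \<Longrightarrow>
   Comp S (Rst S f) (Rst S g) = Comp S (Rst S g) (Rst S f)"
  using restriction_category_axioms'(3) unfolding hom_def by auto

lemma Rst_comp_Rst:
  "f \<in> hom S A B \<Longrightarrow> g \<in> hom S A C \<Longrightarrow>
   Rst S (Comp S (Rst S f) g) = Comp S (Rst S f) (Rst S g)"
  using restriction_category_axioms'(4) unfolding hom_def by auto

lemma comp_Rst:
  "f \<in> hom S A B \<Longrightarrow> g \<in> hom S B D \<Longrightarrow>
   Comp S f (Rst S g) = Comp S (Rst S (Comp S f g)) f"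
  using restriction_category_axioms'(5) by blast

lemma Rst_Id: "A \<in> Obj S \<Longrightarrow> Rst S (Id S A) = Id S A"
  by (metis Id_in_hom comp_Id_right Rst_comp_self Rst_in_hom)

lemma Rst_Rst: assumes f: "f \<in> hom S A B" shows "Rst S (Rst S f) = Rst S f"
proof -
  have A: "A \<in> Obj S" using hom_Obj[OF f] by blast
  have "Rst S (Comp S (Rst S f) (Id S A)) = Comp S (Rst S f) (Rst S (Id S A))"
    using Rst_comp_Rst[OF f Id_in_hom[OF A]] .
  then show ?thesis using Rst_Id[OF A] comp_Id_right[OF Rst_in_hom[OF f]] by simp
qed

lemma Rst_comp_Rst_self: "f \<in> hom S A B \<Longrightarrow> Comp S (Rst S f) (Rst S f) = Rst S f"
  by (metis Rst_comp_self Rst_in_hom Rst_Rst)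

lemma Rst_comp_Rst_right:
  assumes f: "f \<in> hom S A B" and g: "g \<in> hom S B D"
  shows "Rst S (Comp S f (Rst S g)) = Rst S (Comp S f g)"
proof -
  have fg: "Comp S f g \<in> hom S A D" using comp_in_hom[OF f g] .
  have "Rst S (Comp S f (Rst S g)) = Rst S (Comp S (Rst S (Comp S f g)) f)"
    using comp_Rst[OF f g] by simp
  also have "\<dots> = Comp S (Rst S f) (Rst S (Comp S f g))"
    using Rst_comp_Rst[OF fg f] Rst_comp_commute[OF fg f] by simp
  also have "\<dots> = Rst S (Comp S (Rst S f) (Comp S f g))"
    using Rst_comp_Rst[OF f fg] by simp
  also have "\<dots> = Rst S (Comp S f g)"
    using comp_assoc[OF Rst_in_hom[OF f] f g] Rst_comp_self[OF f] by simp
  finally show ?thesis .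
qed

lemma rleq_antisym:
  assumes f: "f \<in> hom S A B" and g: "g \<in> hom S A B" and "rleq S f g" and "rleq S g f"
  shows "f = g"
proof -
  have fg: "Comp S (Rst S f) g = f" and gf: "Comp S (Rst S g) f = g"
    using assms unfolding rleq_def by auto
  have "Rst S f = Comp S (Rst S f) (Rst S g)" using Rst_comp_Rst[OF f g] fg by metis
  also have "\<dots> = Rst S g" using Rst_comp_Rst[OF g f] gf Rst_comp_commute[OF f g] by metis
  finally show ?thesis using fg Rst_comp_self[OF g] by metis
qed

lemma rleq_eq_if_Rst_eq: "rleq S f g \<Longrightarrow> Rst S f = Rst S g \<Longrightarrow> g \<in> hom S A B \<Longrightarrow> f = g"
  unfolding rleq_def using Rst_comp_self by metis

lemma rleq_Rst:
  assumes f: "f \<in> hom S A B" and g: "g \<in> hom S A B" and "rleq S f g"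
  shows "rleq S (Rst S f) (Rst S g)"
  using assms Rst_comp_Rst[OF f g] Rst_Rst[OF f] unfolding rleq_def by simp

lemma Rst_rleq_Id: "f \<in> hom S A B \<Longrightarrow> rleq S (Rst S f) (Id S A)"
  unfolding rleq_def using Rst_Rst comp_Id_right Rst_in_hom by metis

lemma Rst_eq_if_rleq_Id: "e \<in> hom S A A \<Longrightarrow> rleq S e (Id S A) \<Longrightarrow> Rst S e = e"
  unfolding rleq_def using comp_Id_right Rst_in_hom by metis

lemma is_join_unique: "is_join S A B F j \<Longrightarrow> is_join S A B F k \<Longrightarrow> j = k"
  unfolding is_join_def by (meson rleq_antisym)

lemma compatible_family_if_bounded:
  assumes u: "u \<in> hom S A B" and F: "F \<subseteq> hom S A B" and le: "\<forall>f \<in> F. rleq S f u"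
  shows "compatible_family S F"
  unfolding compatible_family_def compatible_def
proof (intro ballI)
  fix f g assume "f \<in> F" "g \<in> F"
  then have f: "f \<in> hom S A B" and g: "g \<in> hom S A B"
    and ff: "Comp S (Rst S f) u = f" and gg: "Comp S (Rst S g) u = g"
    using F le unfolding rleq_def by auto
  have "Comp S (Rst S f) g = Comp S (Comp S (Rst S f) (Rst S g)) u"
    using gg comp_assoc[OF Rst_in_hom[OF f] Rst_in_hom[OF g] u] by simp
  also have "\<dots> = Comp S (Rst S g) f"
    using ff Rst_comp_commute[OF f g] comp_assoc[OF Rst_in_hom[OF g] Rst_in_hom[OF f] u] by simp
  finally show "Comp S (Rst S f) g = Comp S (Rst S g) f" .
qed

lemma compatible_family_if_is_join:
  "F \<subseteq> hom S A B \<Longrightarrow> is_join S A B F j \<Longrightarrow> compatible_family S F"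
  unfolding is_join_def using compatible_family_if_bounded by blast

end

locale join_restriction_cat =
  fixes S :: "('o, 'a, 'x) rdrc_data_scheme"
  assumes join_restriction_category: "join_restriction_category S"
begin

lemmas join_restriction_category_axioms' =
  join_restriction_category[unfolded join_restriction_category_def, THEN conjunct1]
  join_restriction_category[unfolded join_restriction_category_def, THEN conjunct2, THEN conjunct1]
  join_restriction_category[unfolded join_restriction_category_def, THEN conjunct2, THEN conjunct2]

end

sublocale join_restriction_cat \<subseteq> restriction_cat
  by unfold_locales (fact join_restriction_category_axioms'(1))

context join_restriction_cat
begin

lemma join_exists:
  "A \<in> Obj S \<Longrightarrow> B \<in> Obj S \<Longrightarrow> F \<subseteq> hom S A B \<Longrightarrow> compatible_family S F \<Longrightarrow>
   \<exists>j. is_join S A B F j"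
  using join_restriction_category_axioms'(2) by blast

lemma is_join_comp_left:
  "F \<subseteq> hom S A B \<Longrightarrow> is_join S A B F j \<Longrightarrow> h \<in> hom S D A \<Longrightarrow>
   is_join S D B ((\<lambda>f. Comp S h f) ` F) (Comp S h j)"
  using join_restriction_category_axioms'(3) compatible_family_if_is_join by blast

lemma is_join_comp_right:
  "F \<subseteq> hom S A B \<Longrightarrow> is_join S A B F j \<Longrightarrow> k \<in> hom S B D \<Longrightarrow>
   is_join S A D ((\<lambda>f. Comp S f k) ` F) (Comp S j k)"
  using join_restriction_category_axioms'(3) compatible_family_if_is_join by blast

text \<open>The join k of the restrictions is itself a restriction idempotent, and k j = j
  because postcomposing with j turns each restriction of f back into f.\<close>

lemma is_join_Rst:
  assumes F: "F \<subseteq> hom S A B" and J: "is_join S A B F j"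
  shows "is_join S A A (Rst S ` F) (Rst S j)"
proof -
  have j: "j \<in> hom S A B" and below_j: "\<forall>f \<in> F. rleq S f j"
    using J unfolding is_join_def by auto
  have A: "A \<in> Obj S" using hom_Obj[OF j] by blast
  have RF: "Rst S ` F \<subseteq> hom S A A" using F Rst_in_hom by blast
  have below_Id: "\<forall>e \<in> Rst S ` F. rleq S e (Id S A)" using F Rst_rleq_Id by blast
  obtain k where K: "is_join S A A (Rst S ` F) k"
    using join_exists[OF A A RF compatible_family_if_bounded[OF Id_in_hom[OF A] RF below_Id]]
    by blast
  have k: "k \<in> hom S A A" using K unfolding is_join_def by blast
  have Rst_k: "Rst S k = k"
    using K Id_in_hom[OF A] below_Id Rst_eq_if_rleq_Id[OF k] unfolding is_join_def by blast
  have "(\<lambda>e. Comp S e j) ` Rst S ` F = F"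
    using below_j unfolding rleq_def by (force simp: image_image)
  then have "is_join S A B F (Comp S k j)" using is_join_comp_right[OF RF K j] by simp
  then have kj: "Comp S k j = j" using is_join_unique[OF _ J] by blast
  have "rleq S k (Rst S j)"
    using K Rst_in_hom[OF j] rleq_Rst[OF _ j] below_j F unfolding is_join_def by blast
  then have "k = Rst S j"
    using Rst_comp_Rst[OF k j] kj Rst_k unfolding rleq_def by metis
  then show ?thesis using K by simp
qed

end

locale cartesian_restriction_cat = restriction_cat +
  assumes restriction_products: "restriction_products S"
begin

lemma Prod_facts:
  assumes "A \<in> Obj S" "B \<in> Obj S"
  shows "Prod S A B \<in> Obj S \<and>
        Pi0 S A B \<in> hom S (Prod S A B) A \<and> total S (Pi0 S A B) \<and>
        Pi1 S A B \<in> hom S (Prod S A B) B \<and> total S (Pi1 S A B) \<and>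
        (\<forall>X f g. f \<in> hom S X A \<longrightarrow> g \<in> hom S X B \<longrightarrow>
           Pair S f g \<in> hom S X (Prod S A B) \<and>
           Comp S (Pair S f g) (Pi0 S A B) = Comp S (Rst S g) f \<and>
           Comp S (Pair S f g) (Pi1 S A B) = Comp S (Rst S f) g \<and>
           (\<forall>h \<in> hom S X (Prod S A B).
              Comp S h (Pi0 S A B) = Comp S (Rst S g) f \<and>
              Comp S h (Pi1 S A B) = Comp S (Rst S f) g \<longrightarrow> h = Pair S f g))"
  using restriction_products assms unfolding restriction_products_def by blast

lemma Prod_in_Obj: "A \<in> Obj S \<Longrightarrow> B \<in> Obj S \<Longrightarrow> Prod S A B \<in> Obj S"
  using Prod_facts by blast

lemma Pi0_in_hom: "A \<in> Obj S \<Longrightarrow> B \<in> Obj S \<Longrightarrow> Pi0 S A B \<in> hom S (Prod S A B) A"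
  using Prod_facts by blast

lemma Pi1_in_hom: "A \<in> Obj S \<Longrightarrow> B \<in> Obj S \<Longrightarrow> Pi1 S A B \<in> hom S (Prod S A B) B"
  using Prod_facts by blast

lemma Rst_Pi0: "A \<in> Obj S \<Longrightarrow> B \<in> Obj S \<Longrightarrow> Rst S (Pi0 S A B) = Id S (Prod S A B)"
  using Prod_facts[of A B] hom_Dom[OF Pi0_in_hom] unfolding total_def by metis

lemma Rst_Pi1: "A \<in> Obj S \<Longrightarrow> B \<in> Obj S \<Longrightarrow> Rst S (Pi1 S A B) = Id S (Prod S A B)"
  using Prod_facts[of A B] hom_Dom[OF Pi1_in_hom] unfolding total_def by metis

lemma Pair_in_hom: "f \<in> hom S X A \<Longrightarrow> g \<in> hom S X B \<Longrightarrow> Pair S f g \<in> hom S X (Prod S A B)"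
  using Prod_facts hom_Obj by blast

lemma Pair_Pi0:
  "f \<in> hom S X A \<Longrightarrow> g \<in> hom S X B \<Longrightarrow> Comp S (Pair S f g) (Pi0 S A B) = Comp S (Rst S g) f"
  using Prod_facts hom_Obj by blast

lemma Pair_Pi1:
  "f \<in> hom S X A \<Longrightarrow> g \<in> hom S X B \<Longrightarrow> Comp S (Pair S f g) (Pi1 S A B) = Comp S (Rst S f) g"
  using Prod_facts hom_Obj by blast

lemma Pair_unique:
  assumes "f \<in> hom S X A" "g \<in> hom S X B" "h \<in> hom S X (Prod S A B)"
    and "Comp S h (Pi0 S A B) = Comp S (Rst S g) f" "Comp S h (Pi1 S A B) = Comp S (Rst S f) g"
  shows "h = Pair S f g"
  using Prod_facts[of A B] hom_Obj assms by blast

lemma Pair_Pi0_Rst_Pi1: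
  assumes f: "f \<in> hom S A C" and B: "B \<in> Obj S"
  shows "Pair S (Comp S (Pi0 S A B) (Rst S f)) (Pi1 S A B) = Rst S (Comp S (Pi0 S A B) f)"
proof -
  have A: "A \<in> Obj S" using hom_Obj[OF f] by blast
  note p0 = Pi0_in_hom[OF A B] and p1 = Pi1_in_hom[OF A B]
  have a: "Comp S (Pi0 S A B) (Rst S f) \<in> hom S (Prod S A B) A"
    using comp_in_hom[OF p0 Rst_in_hom[OF f]] .
  have "Comp S (Rst S (Comp S (Pi0 S A B) f)) (Pi0 S A B) = Comp S (Pi0 S A B) (Rst S f)"
    using comp_Rst[OF p0 f] by simp
  also have "\<dots> = Comp S (Rst S (Pi1 S A B)) (Comp S (Pi0 S A B) (Rst S f))"
    using Rst_Pi1[OF A B] comp_Id_left[OF a] by simp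
  finally show ?thesis
    using Pair_unique[OF a p1 Rst_in_hom[OF comp_in_hom[OF p0 f]]] Rst_comp_Rst_right[OF p0 f]
    by simp
qed

lemma prodmap_Rst_Id:
  assumes f: "f \<in> hom S A C" and B: "B \<in> Obj S"
  shows "prodmap S (Rst S f) (Id S B) = Rst S (Comp S (Pi0 S A B) f)"
proof -
  have "prodmap S (Rst S f) (Id S B) = Pair S (Comp S (Pi0 S A B) (Rst S f)) (Pi1 S A B)"
    unfolding prodmap_def
    using hom_Dom[OF Rst_in_hom[OF f]] hom_Dom[OF Id_in_hom[OF B]]
      comp_Id_right[OF Pi1_in_hom[OF _ B]] hom_Obj[OF f] by simp
  then show ?thesis using Pair_Pi0_Rst_Pi1[OF f B] by simp
qed

lemma Pair_Pi0_comp_Rst_Pi0: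
  assumes k: "k \<in> hom S (Prod S A B) A" and f: "f \<in> hom S A C" and B: "B \<in> Obj S"
  shows "Comp S (Pair S (Pi0 S A B) k) (Comp S (Rst S (Comp S (Pi0 S A A) f)) (Pi1 S A A)) =
         Comp S (Rst S (Comp S (Pi0 S A B) f)) k"
proof -
  have A: "A \<in> Obj S" using hom_Obj[OF f] by blast
  define p where "p = Pair S (Pi0 S A B) k"
  define d where "d = Rst S (Comp S (Pi0 S A B) f)"
  note p0 = Pi0_in_hom[OF A B] and q0 = Pi0_in_hom[OF A A] and q1 = Pi1_in_hom[OF A A]
  have p: "p \<in> hom S (Prod S A B) (Prod S A A)" unfolding p_def using Pair_in_hom[OF p0 k] .
  have q0f: "Comp S (Pi0 S A A) f \<in> hom S (Prod S A A) C" using comp_in_hom[OF q0 f] .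
  have p0f: "Comp S (Pi0 S A B) f \<in> hom S (Prod S A B) C" using comp_in_hom[OF p0 f] .
  have d: "d \<in> hom S (Prod S A B) (Prod S A B)" unfolding d_def using Rst_in_hom[OF p0f] .
  have p_q0f: "Comp S p (Comp S (Pi0 S A A) f) = Comp S (Rst S k) (Comp S (Pi0 S A B) f)"
    unfolding p_def using comp_assoc[OF Pair_in_hom[OF p0 k] q0 f] Pair_Pi0[OF p0 k]
      comp_assoc[OF Rst_in_hom[OF k] p0 f] by simp
  have p_q1: "Comp S p (Pi1 S A A) = k"
    unfolding p_def using Pair_Pi1[OF p0 k] Rst_Pi0[OF A B] comp_Id_left[OF k] by simp
  have "Comp S p (Comp S (Rst S (Comp S (Pi0 S A A) f)) (Pi1 S A A))
      = Comp S (Comp S (Rst S (Comp S p (Comp S (Pi0 S A A) f))) p) (Pi1 S A A)"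
    using comp_assoc[OF p Rst_in_hom[OF q0f] q1] comp_Rst[OF p q0f] by simp
  also have "\<dots> = Comp S (Comp S (Rst S k) d) k"
    using p_q0f Rst_comp_Rst[OF k p0f] p_q1
      comp_assoc[OF comp_in_hom[OF Rst_in_hom[OF k] d] p q1] unfolding d_def by simp
  also have "\<dots> = Comp S d k"
    using Rst_comp_commute[OF k p0f] comp_assoc[OF d Rst_in_hom[OF k] k]
      Rst_comp_self[OF k] unfolding d_def by simp
  finally show ?thesis unfolding p_def d_def .
qed

end

locale reverse_diff_restriction_cat =
  fixes S :: "('o, 'a, 'x) rdrc_data_scheme"
  assumes rdrc: "rdrc S"
begin

lemmas restriction_category_with_products =
  rdrc[unfolded rdrc_def cartesian_left_additive_restriction_category_def,
    THEN conjunct1, THEN conjunct1]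
  rdrc[unfolded rdrc_def cartesian_left_additive_restriction_category_def,
    THEN conjunct1, THEN conjunct2, THEN conjunct1]

lemmas Rev_axioms =
  rdrc[unfolded rdrc_def, THEN conjunct2, THEN conjunct1, rule_format]

end

sublocale reverse_diff_restriction_cat \<subseteq> cartesian_restriction_cat
  by unfold_locales (fact restriction_category_with_products)+

context reverse_diff_restriction_cat
begin

lemma Rev_in_hom: "f \<in> hom S A B \<Longrightarrow> Rev S f \<in> hom S (Prod S A B) A"
  using Rev_axioms hom_Obj by blast

lemma Rev_comp:
  "f \<in> hom S A B \<Longrightarrow> g \<in> hom S B D \<Longrightarrow>
   Rev S (Comp S f g) =
     Comp S (Pair S (Pi0 S A D) (Comp S (Pair S (Comp S (Pi0 S A D) f) (Pi1 S A D)) (Rev S g)))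
            (Rev S f)"
  using Rev_axioms hom_Obj by blast

lemma Rst_Rev_prodmap: "f \<in> hom S A B \<Longrightarrow> Rst S (Rev S f) = prodmap S (Rst S f) (Id S B)"
  using Rev_axioms hom_Obj by blast

lemma Rev_Rst_prodmap:
  "f \<in> hom S A B \<Longrightarrow> Rev S (Rst S f) = Comp S (prodmap S (Rst S f) (Id S A)) (Pi1 S A A)"
  using Rev_axioms hom_Obj by blast

lemma Rst_Rev: "f \<in> hom S A B \<Longrightarrow> Rst S (Rev S f) = Rst S (Comp S (Pi0 S A B) f)"
  using Rst_Rev_prodmap prodmap_Rst_Id hom_Obj by metis

lemma Rev_Rst:
  assumes f: "f \<in> hom S A B"
  shows "Rev S (Rst S f) = Comp S (Rst S (Comp S (Pi0 S A A) f)) (Pi1 S A A)"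
  using Rev_Rst_prodmap[OF f] prodmap_Rst_Id[OF f] hom_Obj[OF f] by simp

lemma Rev_Rst_comp:
  assumes f: "f \<in> hom S A C" and g: "g \<in> hom S A B"
  shows "Rev S (Comp S (Rst S f) g) = Comp S (Rst S (Comp S (Pi0 S A B) f)) (Rev S g)"
proof -
  have A: "A \<in> Obj S" and B: "B \<in> Obj S" using hom_Obj[OF g] by auto
  define d where "d = Rst S (Comp S (Pi0 S A B) f)"
  have p0f: "Comp S (Pi0 S A B) f \<in> hom S (Prod S A B) C"
    using comp_in_hom[OF Pi0_in_hom[OF A B] f] .
  have k: "Comp S d (Rev S g) \<in> hom S (Prod S A B) A"
    unfolding d_def using comp_in_hom[OF Rst_in_hom[OF p0f] Rev_in_hom[OF g]] .
  have "Rev S (Comp S (Rst S f) g)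
      = Comp S (Pair S (Pi0 S A B) (Comp S d (Rev S g))) (Rev S (Rst S f))"
    using Rev_comp[OF Rst_in_hom[OF f] g] Pair_Pi0_Rst_Pi1[OF f B] unfolding d_def by simp
  also have "\<dots> = Comp S d (Comp S d (Rev S g))"
    using Rev_Rst[OF f] Pair_Pi0_comp_Rst_Pi0[OF k f B] unfolding d_def by simp
  also have "\<dots> = Comp S d (Rev S g)"
    using comp_assoc[OF Rst_in_hom[OF p0f] Rst_in_hom[OF p0f] Rev_in_hom[OF g]]
      Rst_comp_Rst_self[OF p0f] unfolding d_def by simp
  finally show ?thesis unfolding d_def .
qed

lemma Rev_mono:
  assumes f: "f \<in> hom S A B" and g: "g \<in> hom S A B" and "rleq S f g"
  shows "rleq S (Rev S f) (Rev S g)"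
proof -
  have "Rev S f = Rev S (Comp S (Rst S f) g)" using \<open>rleq S f g\<close> unfolding rleq_def by simp
  also have "\<dots> = Comp S (Rst S (Rev S f)) (Rev S g)"
    using Rev_Rst_comp[OF f g] Rst_Rev[OF f] by simp
  finally show ?thesis unfolding rleq_def by simp
qed

lemma Rev_join:
  assumes jrc: "join_restriction_category S"
    and F: "F \<subseteq> hom S A B" and J: "is_join S A B F j"
  shows "is_join S (Prod S A B) A (Rev S ` F) (Rev S j)"
proof -
  interpret join_restriction_cat S by unfold_locales (fact jrc)
  have j: "j \<in> hom S A B" and below_j: "\<forall>f \<in> F. rleq S f j"
    using J unfolding is_join_def by auto
  have A: "A \<in> Obj S" and B: "B \<in> Obj S" using hom_Obj[OF j] by auto
  note p0 = Pi0_in_hom[OF A B]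
  have RevF: "Rev S ` F \<subseteq> hom S (Prod S A B) A" using F Rev_in_hom by blast
  have below_Rev_j: "\<forall>r \<in> Rev S ` F. rleq S r (Rev S j)"
    using F below_j Rev_mono[OF _ j] by blast
  obtain K where K: "is_join S (Prod S A B) A (Rev S ` F) K"
    using join_exists[OF Prod_in_Obj[OF A B] A RevF]
      compatible_family_if_bounded[OF Rev_in_hom[OF j] RevF below_Rev_j] by blast
  have "rleq S K (Rev S j)" using K Rev_in_hom[OF j] below_Rev_j unfolding is_join_def by blast
  moreover have "Rst S K = Rst S (Rev S j)"
  proof -
    have p0F: "(\<lambda>f. Comp S (Pi0 S A B) f) ` F \<subseteq> hom S (Prod S A B) B"
      using F comp_in_hom[OF p0] by blast
    have "Rst S ` Rev S ` F = Rst S ` (\<lambda>f. Comp S (Pi0 S A B) f) ` F"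
      using F Rst_Rev by (force simp: image_image)
    then have "is_join S (Prod S A B) (Prod S A B) (Rst S ` Rev S ` F)
        (Rst S (Comp S (Pi0 S A B) j))"
      using is_join_Rst[OF p0F is_join_comp_left[OF F J p0]] by simp
    then show ?thesis using is_join_unique is_join_Rst[OF RevF K] Rst_Rev[OF j] by metis
  qed
  ultimately have "K = Rev S j" using rleq_eq_if_Rst_eq Rev_in_hom[OF j] by blast
  then show ?thesis using K by simp
qed

end

theorem mainTheorem2:
  fixes S :: "('o, 'a, 'x) rdrc_data_scheme"
  assumes "rdrc S"
  shows "(\<forall>A B f g. f \<in> hom S A B \<and> g \<in> hom S A B \<and> rleq S f g \<longrightarrow>
             rleq S (Rev S f) (Rev S g)) \<and>
         (join_restriction_category S \<longrightarrow>
           (\<forall>A B F j. F \<subseteq> hom S A B \<and> compatible_family S F \<and> is_join S A B F j \<longrightarrow>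
              is_join S (Prod S A B) A (Rev S ` F) (Rev S j)))"
proof -
  interpret reverse_diff_restriction_cat S by unfold_locales (fact assms)
  show ?thesis using Rev_mono Rev_join by blast
qed

end
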